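(* Let $K$ be a simplicial complex on $[m]$ and $\mathbf{k}$ a commutative ring. Let $I,J\subset[m]$ with $I\cap J=\varnothing$, $\alpha\in\widetilde H^i(K_I;\mathbf{k})$, $\beta\in\widetilde H^j(K_J;\mathbf{k})$. Suppose $I\subset I'\subset I\cup J$ and $\alpha=\phi^*(\alpha')$ for some $\alpha'\in\widetilde H^i(K_{I'};\mathbf{k})$, where $\phi:K_I\hookrightarrow K_{I'}$ is the inclusion. Let $J'=(I\cup J)\setminus I'$ and $\beta'=\psi^*(\beta)$, where $\psi:K_{J'}\hookrightarrow K_J$ is the inclusion. Then $\alpha\cdot\beta=\alpha'\cdot\beta'$ in the Baskakov–Hochster ring of $K$.
   Context: $K_I$ is the full subcomplex on $I$. The Baskakov–Hochster ring of $K$ is $\bigoplus_{J\subset[m]}\widetilde H^*(K_J;\mathbf{k})$ (with $\widetilde H^{-1}(K_\varnothing)=\mathbf{k}$) with the product which, for $I\cap J=\varnothing$, is the map $\widetilde H^{p}(K_I)\otimes\widetilde H^{q}(K_J)\to\widetilde H^{p+q+1}(K_{I\cup J})$ induced by the inclusion $K_{I\cup J}\hookrightarrow K_I*K_J$ and the cochain isomorphism $\widetilde C^{p}(K_I)\otimes\widetilde C^{q}(K_J)\to\widetilde C^{p+q+1}(K_I*K_J)$, $\sigma\otimes\tau\mapsto\sigma\cup\tau$, and is zero when $I\cap J\neq\varnothing$. *)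

theory Defs
  imports Main
begin

text \<open>A simplicial complex on [m] = {1..m}: a family of subsets of [m], containing the
  empty simplex, closed under taking subsets (ghost vertices allowed).\<close>
definition simplicial_complex :: "nat \<Rightarrow> nat set set \<Rightarrow> bool" where
  "simplicial_complex m K \<longleftrightarrow> {} \<in> K \<and> (\<forall>\<sigma>\<in>K. \<sigma> \<subseteq> {1..m})
     \<and> (\<forall>\<sigma>\<in>K. \<forall>\<tau>. \<tau> \<subseteq> \<sigma> \<longrightarrow> \<tau> \<in> K)"

definition full_sub :: "nat set set \<Rightarrow> nat set \<Rightarrow> nat set set" where
  "full_sub K I = {\<sigma>\<in>K. \<sigma> \<subseteq> I}"

definition simplices :: "nat set set \<Rightarrow> int \<Rightarrow> nat set set" where
  "simplices K p = {\<sigma>\<in>K. int (card \<sigma>) = p + 1}"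

text \<open>Cochains are functions on simplices (values elsewhere are irrelevant); simplices are
  oriented by the natural order of their vertices. Augmented (reduced) coboundary.\<close>
definition coboundary :: "(nat set \<Rightarrow> 'k::comm_ring_1) \<Rightarrow> nat set \<Rightarrow> 'k" where
  "coboundary f \<sigma> = (\<Sum>k<card \<sigma>. (-1)^k * f (\<sigma> - {sorted_list_of_set \<sigma> ! k}))"

definition cocycle :: "nat set set \<Rightarrow> int \<Rightarrow> (nat set \<Rightarrow> 'k::comm_ring_1) \<Rightarrow> bool" where
  "cocycle K p f \<longleftrightarrow> (\<forall>\<sigma>\<in>simplices K (p + 1). coboundary f \<sigma> = 0)"

definition is_coboundary :: "nat set set \<Rightarrow> int \<Rightarrow> (nat set \<Rightarrow> 'k::comm_ring_1) \<Rightarrow> bool" where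
  "is_coboundary K p f \<longleftrightarrow> (\<exists>h. \<forall>\<sigma>\<in>simplices K p. f \<sigma> = coboundary h \<sigma>)"

definition cohom_class :: "nat set set \<Rightarrow> int \<Rightarrow> (nat set \<Rightarrow> 'k::comm_ring_1) \<Rightarrow> (nat set \<Rightarrow> 'k) set" where
  "cohom_class K p f = {g. cocycle K p g \<and> is_coboundary K p (\<lambda>\<sigma>. f \<sigma> - g \<sigma>)}"

definition rcohom :: "nat set set \<Rightarrow> int \<Rightarrow> (nat set \<Rightarrow> 'k::comm_ring_1) set set" where
  "rcohom K p = {cohom_class K p f | f. cocycle K p f}"

text \<open>Map induced in degree p by the inclusion of a subcomplex L (restriction of cochains):
  the class of the restriction of any representative.\<close>
definition induced_incl :: "nat set set \<Rightarrow> int \<Rightarrow> (nat set \<Rightarrow> 'k::comm_ring_1) set \<Rightarrow> (nat set \<Rightarrow> 'k) set" where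
  "induced_incl L p A = cohom_class L p (SOME f. f \<in> A)"

text \<open>The cochain on K_{I \<union> J} obtained from f \<otimes> g under
  C^p(K_I) \<otimes> C^q(K_J) \<rightarrow> C^{p+q+1}(K_I * K_J), \<sigma> \<otimes> \<tau> \<mapsto> \<sigma> \<union> \<tau>
  (join simplex oriented with the vertices of \<sigma> before those of \<tau>),
  restricted to K_{I \<union> J}.  Evaluated on the naturally ordered simplex \<rho> this gives
  the shuffle sign.\<close>
definition shuffle_inv :: "nat set \<Rightarrow> nat set \<Rightarrow> nat" where
  "shuffle_inv A B = card {(x, y). x \<in> A \<and> y \<in> B \<and> y < x}"

definition join_cochain :: "nat set \<Rightarrow> nat set \<Rightarrow> int \<Rightarrow> int \<Rightarrow> (nat set \<Rightarrow> 'k::comm_ring_1)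
    \<Rightarrow> (nat set \<Rightarrow> 'k) \<Rightarrow> nat set \<Rightarrow> 'k" where
  "join_cochain I J p q f g \<rho> =
     (if int (card (\<rho> \<inter> I)) = p + 1 \<and> int (card (\<rho> \<inter> J)) = q + 1
      then (-1) ^ shuffle_inv (\<rho> \<inter> I) (\<rho> \<inter> J) * f (\<rho> \<inter> I) * g (\<rho> \<inter> J)
      else 0)"

definition bh_mult :: "nat set set \<Rightarrow> nat set \<Rightarrow> nat set \<Rightarrow> int \<Rightarrow> int
    \<Rightarrow> (nat set \<Rightarrow> 'k::comm_ring_1) set \<Rightarrow> (nat set \<Rightarrow> 'k) set \<Rightarrow> (nat set \<Rightarrow> 'k) set" where
  "bh_mult K I J p q A B =
     (if I \<inter> J = {}
      then cohom_class (full_sub K (I \<union> J)) (p + q + 1)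
             (join_cochain I J p q (SOME f. f \<in> A) (SOME g. g \<in> B))
      else cohom_class (full_sub K (I \<union> J)) (p + q + 1) (\<lambda>_. 0))"

end

theory Submission
  imports Defs
begin

text \<open>Represent \<open>\<alpha>'\<close> by a cocycle \<open>f\<close> on \<open>K_{I'}\<close> and \<open>\<beta>\<close> by a cocycle \<open>g\<close> on \<open>K_J\<close>; then
  \<open>\<alpha>\<close> and \<open>\<beta>'\<close> are represented by restrictions of the same cochains, and both products are
  classes of join cochains of \<open>f\<close> and \<open>g\<close>, taken once for the splitting \<open>(I, J)\<close> and once
  for \<open>(I', J')\<close>. Moving one vertex \<open>x \<in> I' - I\<close> from the right factor of the join to the
  left one is a contiguity of the two simplicial maps \<open>K_{I\<union>J} \<rightarrow> K_{I \<union> {x}} * K_J\<close>, and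
  its explicit cochain homotopy shows that the two join cochains differ by a coboundary.
  That the class of the join cochain does not depend on the representatives follows from
  the Leibniz rule for the coboundary of a join cochain.\<close>

text \<open>\<open>(-1)^vertex_pos \<sigma> y\<close> is the sign of the face \<open>\<sigma> - {y}\<close> in the coboundary of \<open>\<sigma>\<close>.\<close>
definition vertex_pos :: "nat set \<Rightarrow> nat \<Rightarrow> nat" where
  "vertex_pos S y = card {z\<in>S. z < y}"

lemma vertex_pos_nth:
  assumes "sorted_wrt (<) xs" "k < length xs"
  shows "vertex_pos (set xs) (xs ! k) = k"
proof -
  have "{z\<in>set xs. z < xs!k} = (\<lambda>l. xs!l) ` {..<k}"
  proof (intro set_eqI iffI)
    fix z assume "z \<in> {z\<in>set xs. z < xs!k}"
    then obtain l where l: "l < length xs" "z = xs!l" "xs!l < xs!k"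
      by (auto simp: in_set_conv_nth)
    have "l < k"
      using assms l by (metis linorder_not_less order.order_iff_strict order.asym sorted_wrt_nth_less)
    then show "z \<in> (\<lambda>l. xs!l) ` {..<k}" using l by auto
  next
    fix z assume "z \<in> (\<lambda>l. xs!l) ` {..<k}"
    then show "z \<in> {z\<in>set xs. z < xs!k}" using assms by (auto simp: sorted_wrt_nth_less)
  qed
  moreover have "inj_on (\<lambda>l. xs!l) {..<k}"
    using assms strict_sorted_iff[of xs] by (auto simp: inj_on_def nth_eq_iff_index_eq)
  ultimately show ?thesis unfolding vertex_pos_def by (simp add: card_image)
qed

lemma coboundary_eq_sum:
  assumes "finite \<sigma>"
  shows "coboundary f \<sigma> = (\<Sum>y\<in>\<sigma>. (-1)^vertex_pos \<sigma> y * f (\<sigma> - {y}))"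
proof -
  define xs where "xs = sorted_list_of_set \<sigma>"
  have ss: "sorted_wrt (<) xs" and st: "set xs = \<sigma>" and len: "length xs = card \<sigma>"
    using assms by (auto simp: xs_def strict_sorted_list_of_set)
  have "bij_betw (\<lambda>k. xs!k) {..<card \<sigma>} \<sigma>"
    using ss len st strict_sorted_iff by (metis atLeast0LessThan bij_betw_nth)
  then have "(\<Sum>y\<in>\<sigma>. (-1)^vertex_pos \<sigma> y * f (\<sigma> - {y}))
      = (\<Sum>k<card \<sigma>. (-1)^vertex_pos \<sigma> (xs!k) * f (\<sigma> - {xs!k}))"
    by (simp add: sum.reindex_bij_betw[symmetric])
  also have "\<dots> = (\<Sum>k<card \<sigma>. (-1)^k * f (\<sigma> - {xs!k}))"
    using vertex_pos_nth[OF ss] st len by (intro sum.cong) auto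
  finally show ?thesis unfolding coboundary_def xs_def by simp
qed

lemma coboundary_insert:
  assumes "finite a" "x \<notin> a"
  shows "coboundary f (insert x a)
       = (-1)^vertex_pos a x * f a + (\<Sum>y\<in>a. (-1)^vertex_pos (insert x a) y * f (insert x a - {y}))"
proof -
  have "vertex_pos (insert x a) x = vertex_pos a x" unfolding vertex_pos_def
    by (metis (lifting) insert_iff less_irrefl mem_Collect_eq)
  moreover have "insert x a - {x} = a" using assms(2) by auto
  ultimately show ?thesis using assms by (simp add: coboundary_eq_sum)
qed

lemma vertex_pos_Un:
  assumes "finite a" "finite b" "a \<inter> b = {}"
  shows "vertex_pos (a \<union> b) y = vertex_pos a y + vertex_pos b y"
proof -
  have "{z\<in>a \<union> b. z < y} = {z\<in>a. z<y} \<union> {z\<in>b. z<y}" by auto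
  then show ?thesis unfolding vertex_pos_def using assms
    by (simp add: card_Un_disjoint disjoint_iff)
qed

lemma vertex_pos_add_card_greater:
  assumes "finite a" "x \<notin> a"
  shows "vertex_pos a x + card {u\<in>a. x < u} = card a"
proof -
  have "a = {z\<in>a. z < x} \<union> {u\<in>a. x < u}" using assms(2) by (auto simp: nat_neq_iff) (metis linorder_neqE_nat)
  then have "card a = card ({z\<in>a. z < x} \<union> {u\<in>a. x < u})" by simp
  also have "\<dots> = vertex_pos a x + card {u\<in>a. x < u}" unfolding vertex_pos_def
    using assms(1) by (subst card_Un_disjoint) auto
  finally show ?thesis by simp
qed

lemma shuffle_inv_insert_left:
  assumes "finite a" "finite b" "x \<notin> a"
  shows "shuffle_inv (insert x a) b = shuffle_inv a b + vertex_pos b x"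
proof -
  have e: "{(u, v). u \<in> insert x a \<and> v \<in> b \<and> v < u}
      = {(u, v). u \<in> a \<and> v \<in> b \<and> v < u} \<union> (\<lambda>v. (x, v)) ` {v\<in>b. v < x}" by auto
  have "finite {(u, v). u \<in> a \<and> v \<in> b \<and> v < u}"
    by (rule finite_subset[of _ "a \<times> b"]) (use assms in auto)
  moreover have "card ((\<lambda>v. (x, v)) ` {v\<in>b. v < x}) = vertex_pos b x"
    unfolding vertex_pos_def by (subst card_image) (auto simp: inj_on_def)
  ultimately show ?thesis unfolding shuffle_inv_def e using assms
    by (subst card_Un_disjoint) auto
qed

lemma shuffle_inv_insert_right:
  assumes "finite a" "finite b" "x \<notin> b"
  shows "shuffle_inv a (insert x b) = shuffle_inv a b + card {u\<in>a. x < u}"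
proof -
  have e: "{(u, v). u \<in> a \<and> v \<in> insert x b \<and> v < u}
      = {(u, v). u \<in> a \<and> v \<in> b \<and> v < u} \<union> (\<lambda>u. (u, x)) ` {u\<in>a. x < u}" by auto
  have "finite {(u, v). u \<in> a \<and> v \<in> b \<and> v < u}"
    by (rule finite_subset[of _ "a \<times> b"]) (use assms in auto)
  moreover have "card ((\<lambda>u. (u, x)) ` {u\<in>a. x < u}) = card {u\<in>a. x < u}"
    by (subst card_image) (auto simp: inj_on_def)
  ultimately show ?thesis unfolding shuffle_inv_def e using assms
    by (subst card_Un_disjoint) auto
qed

lemma neg_one_power_add_double: "m + 2 * k = n \<Longrightarrow> (-1::'k::comm_ring_1)^m = (-1)^n"
  by (auto simp: power_add power_mult)

lemma shuffle_sign_insert_right: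
  assumes "finite a" "finite b" "x \<notin> a" "x \<notin> b"
  shows "(-1::'k::comm_ring_1)^shuffle_inv a (insert x b)
       = (-1)^(card a + shuffle_inv a b + vertex_pos a x)"
proof -
  have "card a + shuffle_inv a b + vertex_pos a x = shuffle_inv a (insert x b) + 2 * vertex_pos a x"
    using shuffle_inv_insert_right[of a b x] vertex_pos_add_card_greater[of a x] assms by simp
  then show ?thesis by (metis neg_one_power_add_double)
qed

lemma sign_Un_remove_left:
  assumes "finite a" "finite b" "finite c" "c \<inter> b = {}" "y \<in> a"
  shows "(-1::'k::comm_ring_1)^vertex_pos (c \<union> b) y * (-1)^shuffle_inv (a - {y}) b
       = (-1)^vertex_pos c y * (-1)^shuffle_inv a b"
proof -
  have "shuffle_inv a b = shuffle_inv (a - {y}) b + vertex_pos b y"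
    using shuffle_inv_insert_left[of "a - {y}" b y] assms by (simp add: insert_absorb)
  then show ?thesis using vertex_pos_Un[of c b y] assms by (simp add: power_add mult_ac)
qed

lemma sign_Un_remove_right:
  assumes "finite a" "finite b" "finite c" "a \<inter> c = {}" "y \<in> b" "y \<notin> a"
  shows "(-1::'k::comm_ring_1)^vertex_pos (a \<union> c) y * (-1)^shuffle_inv a (b - {y})
       = (-1)^card a * ((-1)^vertex_pos c y * (-1)^shuffle_inv a b)"
proof -
  have "shuffle_inv a b = shuffle_inv a (b - {y}) + card {u\<in>a. y < u}"
    using shuffle_inv_insert_right[of a "b - {y}" y] assms by (simp add: insert_absorb)
  then have "vertex_pos (a \<union> c) y + shuffle_inv a (b - {y}) + 2 * card {u\<in>a. y < u}
      = card a + vertex_pos c y + shuffle_inv a b"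
    using vertex_pos_Un[of a c y] vertex_pos_add_card_greater[of a y] assms by simp
  then have "(-1::'k)^(vertex_pos (a \<union> c) y + shuffle_inv a (b - {y}))
      = (-1)^(card a + vertex_pos c y + shuffle_inv a b)"
    by (metis neg_one_power_add_double)
  then show ?thesis by (simp add: power_add)
qed

lemma int_card_Diff_singleton: "finite a \<Longrightarrow> y \<in> a \<Longrightarrow> int (card (a - {y})) = int (card a) - 1"
  using card.remove[of a y] by simp

lemma coboundary_join_cochain_sum_left:
  fixes p q :: "nat set \<Rightarrow> 'k::comm_ring_1"
  assumes "finite \<rho>" "A \<inter> B = {}" "\<rho> \<subseteq> A \<union> B"
  shows "(\<Sum>y\<in>\<rho> \<inter> A. (-1)^vertex_pos \<rho> y * join_cochain A B dp dq p q (\<rho> - {y}))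
       = join_cochain A B (dp + 1) dq (coboundary p) q \<rho>"
proof -
  define a where "a = \<rho> \<inter> A"
  define b where "b = \<rho> \<inter> B"
  have fin: "finite a" "finite b" and ab: "a \<inter> b = {}" and \<rho>: "\<rho> = a \<union> b"
    using assms by (auto simp: a_def b_def)
  define C where "C \<longleftrightarrow> int (card a) = dp + 2 \<and> int (card b) = dq + 1"
  have "(-1)^vertex_pos \<rho> y * join_cochain A B dp dq p q (\<rho> - {y})
      = (if C then (-1)^shuffle_inv a b * ((-1)^vertex_pos a y * p (a - {y})) * q b else 0)"
    if y: "y \<in> a" for y
  proof -
    have "(\<rho> - {y}) \<inter> A = a - {y}" "(\<rho> - {y}) \<inter> B = b"
      using y assms(2) by (auto simp: a_def b_def)
    moreover have "int (card (a - {y})) = dp + 1 \<longleftrightarrow> int (card a) = dp + 2"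
      using int_card_Diff_singleton[OF fin(1) y] by linarith
    ultimately have "(-1)^vertex_pos \<rho> y * join_cochain A B dp dq p q (\<rho> - {y})
        = (if C then ((-1)^vertex_pos \<rho> y * (-1)^shuffle_inv (a - {y}) b) * p (a - {y}) * q b else 0)"
      unfolding join_cochain_def C_def by (simp add: mult_ac)
    then show ?thesis
      unfolding sign_Un_remove_left[OF fin(1,2,1) ab y, folded \<rho>] by (simp add: mult_ac)
  qed
  then have "(\<Sum>y\<in>a. (-1)^vertex_pos \<rho> y * join_cochain A B dp dq p q (\<rho> - {y}))
      = (if C then (-1)^shuffle_inv a b * coboundary p a * q b else 0)"
    by (simp add: coboundary_eq_sum[OF fin(1)] sum_distrib_left sum_distrib_right)
  also have "\<dots> = join_cochain A B (dp + 1) dq (coboundary p) q \<rho>"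
    unfolding join_cochain_def C_def a_def b_def by (simp add: add.assoc)
  finally show ?thesis unfolding a_def .
qed

lemma coboundary_join_cochain_sum_right:
  fixes p q :: "nat set \<Rightarrow> 'k::comm_ring_1"
  assumes "finite \<rho>" "A \<inter> B = {}" "\<rho> \<subseteq> A \<union> B"
  shows "(\<Sum>y\<in>\<rho> \<inter> B. (-1)^vertex_pos \<rho> y * join_cochain A B dp dq p q (\<rho> - {y}))
       = (-1)^card (\<rho> \<inter> A) * join_cochain A B dp (dq + 1) p (coboundary q) \<rho>"
proof -
  define a where "a = \<rho> \<inter> A"
  define b where "b = \<rho> \<inter> B"
  have fin: "finite a" "finite b" and ab: "a \<inter> b = {}" and \<rho>: "\<rho> = a \<union> b"
    using assms by (auto simp: a_def b_def)
  define C where "C \<longleftrightarrow> int (card a) = dp + 1 \<and> int (card b) = dq + 2"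
  have "(-1)^vertex_pos \<rho> y * join_cochain A B dp dq p q (\<rho> - {y})
      = (if C then (-1)^card a * (-1)^shuffle_inv a b * p a * ((-1)^vertex_pos b y * q (b - {y})) else 0)"
    if y: "y \<in> b" for y
  proof -
    have "(\<rho> - {y}) \<inter> A = a" "(\<rho> - {y}) \<inter> B = b - {y}" and "y \<notin> a"
      using y assms(2) by (auto simp: a_def b_def)
    moreover have "int (card (b - {y})) = dq + 1 \<longleftrightarrow> int (card b) = dq + 2"
      using int_card_Diff_singleton[OF fin(2) y] by linarith
    ultimately have "(-1)^vertex_pos \<rho> y * join_cochain A B dp dq p q (\<rho> - {y})
        = (if C then ((-1)^vertex_pos \<rho> y * (-1)^shuffle_inv a (b - {y})) * p a * q (b - {y}) else 0)"
      unfolding join_cochain_def C_def by (simp add: mult_ac)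
    then show ?thesis
      unfolding sign_Un_remove_right[OF fin(1,2,2) ab y \<open>y \<notin> a\<close>, folded \<rho>] by (simp add: mult_ac)
  qed
  then have "(\<Sum>y\<in>b. (-1)^vertex_pos \<rho> y * join_cochain A B dp dq p q (\<rho> - {y}))
      = (if C then (-1)^card a * (-1)^shuffle_inv a b * p a * coboundary q b else 0)"
    by (simp add: coboundary_eq_sum[OF fin(2)] sum_distrib_left)
  also have "\<dots> = (-1)^card a * join_cochain A B dp (dq + 1) p (coboundary q) \<rho>"
    unfolding join_cochain_def C_def a_def b_def by (simp add: add.assoc mult_ac)
  finally show ?thesis unfolding a_def b_def .
qed

lemma coboundary_join_cochain:
  assumes "finite \<rho>" "A \<inter> B = {}" "\<rho> \<subseteq> A \<union> B"
  shows "coboundary (join_cochain A B dp dq p q) \<rho>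
       = join_cochain A B (dp + 1) dq (coboundary p) q \<rho>
         + (-1)^card (\<rho> \<inter> A) * join_cochain A B dp (dq + 1) p (coboundary q) \<rho>"
proof -
  define F where "F y = (-1)^vertex_pos \<rho> y * join_cochain A B dp dq p q (\<rho> - {y})" for y
  have e: "(\<rho> \<inter> A) \<union> (\<rho> \<inter> B) = \<rho>" using assms(3) by auto
  have "coboundary (join_cochain A B dp dq p q) \<rho> = sum F ((\<rho> \<inter> A) \<union> (\<rho> \<inter> B))"
    unfolding e F_def by (rule coboundary_eq_sum[OF assms(1)])
  also have "\<dots> = sum F (\<rho> \<inter> A) + sum F (\<rho> \<inter> B)"
    using assms(1,2) by (intro sum.union_disjoint) auto
  finally show ?thesis
    unfolding F_def coboundary_join_cochain_sum_left[OF assms] coboundary_join_cochain_sum_right[OF assms] .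
qed

lemma coboundary_linear:
  "coboundary (\<lambda>\<sigma>. c * u \<sigma> + d * v \<sigma>) \<rho> = c * coboundary u \<rho> + d * coboundary v \<rho>"
  unfolding coboundary_def by (simp add: sum.distrib sum_distrib_left algebra_simps)

lemma is_coboundary_linear:
  assumes "is_coboundary K p u" "is_coboundary K p v"
  shows "is_coboundary K p (\<lambda>\<sigma>. c * u \<sigma> + d * v \<sigma>)"
proof -
  obtain h1 h2 where "\<forall>\<sigma>\<in>simplices K p. u \<sigma> = coboundary h1 \<sigma>"
    and "\<forall>\<sigma>\<in>simplices K p. v \<sigma> = coboundary h2 \<sigma>"
    using assms unfolding is_coboundary_def by blast
  then show ?thesis unfolding is_coboundary_def
    by (intro exI[where x="\<lambda>\<sigma>. c * h1 \<sigma> + d * h2 \<sigma>"]) (simp add: coboundary_linear)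
qed

lemma is_coboundary_zero: "is_coboundary K p (\<lambda>\<sigma>. 0::'k::comm_ring_1)"
  unfolding is_coboundary_def by (intro exI[where x="\<lambda>\<sigma>. 0"]) (simp add: coboundary_def)

lemma is_coboundary_diff_commute:
  "is_coboundary K p (\<lambda>\<sigma>. u \<sigma> - v \<sigma>) \<Longrightarrow> is_coboundary K p (\<lambda>\<sigma>. v \<sigma> - u \<sigma>)"
  using is_coboundary_linear[of K p "\<lambda>\<sigma>. u \<sigma> - v \<sigma>" "\<lambda>\<sigma>. u \<sigma> - v \<sigma>" "-1" 0] by simp

lemma is_coboundary_diff_trans:
  "is_coboundary K p (\<lambda>\<sigma>. u \<sigma> - v \<sigma>) \<Longrightarrow> is_coboundary K p (\<lambda>\<sigma>. v \<sigma> - w \<sigma>)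
    \<Longrightarrow> is_coboundary K p (\<lambda>\<sigma>. u \<sigma> - w \<sigma>)"
  using is_coboundary_linear[of K p "\<lambda>\<sigma>. u \<sigma> - v \<sigma>" "\<lambda>\<sigma>. v \<sigma> - w \<sigma>" 1 1] by simp

lemma cohom_class_eqI:
  assumes "is_coboundary K p (\<lambda>\<sigma>. u \<sigma> - v \<sigma>)"
  shows "cohom_class K p u = cohom_class K p v"
  unfolding cohom_class_def
proof (intro Collect_cong conj_cong refl iffI)
  fix g assume "is_coboundary K p (\<lambda>\<sigma>. u \<sigma> - g \<sigma>)"
  with is_coboundary_diff_commute[OF assms] show "is_coboundary K p (\<lambda>\<sigma>. v \<sigma> - g \<sigma>)"
    by (rule is_coboundary_diff_trans)
next
  fix g assume "is_coboundary K p (\<lambda>\<sigma>. v \<sigma> - g \<sigma>)"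
  with assms show "is_coboundary K p (\<lambda>\<sigma>. u \<sigma> - g \<sigma>)"
    by (rule is_coboundary_diff_trans)
qed

lemma cocycle_in_cohom_class: "cocycle K p f \<Longrightarrow> f \<in> cohom_class K p f"
  unfolding cohom_class_def using is_coboundary_zero by simp

lemma simplices_full_sub_mono: "A \<subseteq> B \<Longrightarrow> simplices (full_sub K A) p \<subseteq> simplices (full_sub K B) p"
  unfolding simplices_def full_sub_def by auto

lemma cocycle_full_sub_mono:
  "A \<subseteq> B \<Longrightarrow> cocycle (full_sub K B) p f \<Longrightarrow> cocycle (full_sub K A) p f"
  unfolding cocycle_def using simplices_full_sub_mono by blast

lemma is_coboundary_full_sub_mono:
  "A \<subseteq> B \<Longrightarrow> is_coboundary (full_sub K B) p f \<Longrightarrow> is_coboundary (full_sub K A) p f"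
  unfolding is_coboundary_def using simplices_full_sub_mono by blast

lemma induced_incl_cohom_class:
  assumes "A \<subseteq> B" "cocycle (full_sub K B) p f"
  shows "induced_incl (full_sub K A) p (cohom_class (full_sub K B) p f) = cohom_class (full_sub K A) p f"
proof -
  have "(SOME g. g \<in> cohom_class (full_sub K B) p f) \<in> cohom_class (full_sub K B) p f"
    using cocycle_in_cohom_class[OF assms(2)] by (rule someI[where P="\<lambda>g. g \<in> _"])
  then have "is_coboundary (full_sub K A) p (\<lambda>\<sigma>. f \<sigma> - (SOME g. g \<in> cohom_class (full_sub K B) p f) \<sigma>)"
    using is_coboundary_full_sub_mono[OF assms(1)] unfolding cohom_class_def by blast
  then show ?thesis
    unfolding induced_incl_def by (rule cohom_class_eqI[OF is_coboundary_diff_commute])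
qed

lemma join_cochain_cong:
  assumes "int (card (\<rho> \<inter> I)) = p + 1 \<Longrightarrow> int (card (\<rho> \<inter> J)) = q + 1
      \<Longrightarrow> f (\<rho> \<inter> I) = f' (\<rho> \<inter> I) \<and> g (\<rho> \<inter> J) = g' (\<rho> \<inter> J)"
  shows "join_cochain I J p q f g \<rho> = join_cochain I J p q f' g' \<rho>"
  using assms unfolding join_cochain_def by auto

lemma join_cochain_zero_left: "join_cochain I J p q (\<lambda>\<sigma>. 0) g \<rho> = 0"
  unfolding join_cochain_def by simp

lemma join_cochain_zero_right: "join_cochain I J p q f (\<lambda>\<sigma>. 0) \<rho> = 0"
  unfolding join_cochain_def by simp

lemma join_cochain_diff_left:
  "join_cochain I J p q (\<lambda>\<sigma>. f1 \<sigma> - f2 \<sigma>) g \<rho> = join_cochain I J p q f1 g \<rho> - join_cochain I J p q f2 g \<rho>"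
  unfolding join_cochain_def by (simp add: algebra_simps)

lemma join_cochain_diff_right:
  "join_cochain I J p q f (\<lambda>\<sigma>. g1 \<sigma> - g2 \<sigma>) \<rho> = join_cochain I J p q f g1 \<rho> - join_cochain I J p q f g2 \<rho>"
  unfolding join_cochain_def by (simp add: algebra_simps)

lemma Int_in_simplices_full_sub:
  assumes "\<forall>\<sigma>\<in>K. \<forall>\<tau>. \<tau> \<subseteq> \<sigma> \<longrightarrow> \<tau> \<in> K"
    and "\<rho> \<in> simplices (full_sub K B) p" "int (card (\<rho> \<inter> A)) = q + 1"
  shows "\<rho> \<inter> A \<in> simplices (full_sub K A) q"
  using assms unfolding simplices_def full_sub_def by blast

lemma cocycle_coboundary_Int_eq_0:
  assumes "\<forall>\<sigma>\<in>K. \<forall>\<tau>. \<tau> \<subseteq> \<sigma> \<longrightarrow> \<tau> \<in> K" and "cocycle (full_sub K A) q f"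
    and "\<rho> \<in> simplices (full_sub K B) p" "int (card (\<rho> \<inter> A)) = q + 2"
  shows "coboundary f (\<rho> \<inter> A) = 0"
  using Int_in_simplices_full_sub[OF assms(1,3), of A "q + 1"] assms(2,4) by (simp add: cocycle_def)

lemma is_coboundary_join_cochain_left:
  fixes f1 f2 g :: "nat set \<Rightarrow> 'k::comm_ring_1"
  assumes down: "\<forall>\<sigma>\<in>K. \<forall>\<tau>. \<tau> \<subseteq> \<sigma> \<longrightarrow> \<tau> \<in> K"
    and fin: "finite (I \<union> J)" and dj: "I \<inter> J = {}"
    and cob: "is_coboundary (full_sub K I) i (\<lambda>\<sigma>. f1 \<sigma> - f2 \<sigma>)"
    and cg: "cocycle (full_sub K J) j g"
  shows "is_coboundary (full_sub K (I \<union> J)) (i + j + 1)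
     (\<lambda>\<rho>. join_cochain I J i j f1 g \<rho> - join_cochain I J i j f2 g \<rho>)"
proof -
  obtain h where h: "\<forall>\<sigma>\<in>simplices (full_sub K I) i. f1 \<sigma> - f2 \<sigma> = coboundary h \<sigma>"
    using cob unfolding is_coboundary_def by blast
  have "join_cochain I J i j f1 g \<rho> - join_cochain I J i j f2 g \<rho>
      = coboundary (join_cochain I J (i - 1) j h g) \<rho>"
    if \<rho>: "\<rho> \<in> simplices (full_sub K (I \<union> J)) (i + j + 1)" for \<rho>
  proof -
    have sub: "\<rho> \<subseteq> I \<union> J" using \<rho> by (auto simp: simplices_def full_sub_def)
    have "join_cochain I J (i - 1) (j + 1) h (coboundary g) \<rho> = join_cochain I J (i - 1) (j + 1) h (\<lambda>\<sigma>. 0) \<rho>"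
      using cocycle_coboundary_Int_eq_0[OF down cg \<rho>] by (intro join_cochain_cong) simp
    moreover have "join_cochain I J i j (coboundary h) g \<rho> = join_cochain I J i j (\<lambda>\<sigma>. f1 \<sigma> - f2 \<sigma>) g \<rho>"
      using h Int_in_simplices_full_sub[OF down \<rho>] by (intro join_cochain_cong) simp
    ultimately show ?thesis
      using coboundary_join_cochain[OF finite_subset[OF sub fin] dj sub, of "i - 1" j h g]
      by (simp add: join_cochain_zero_right join_cochain_diff_left)
  qed
  then show ?thesis unfolding is_coboundary_def by blast
qed

lemma is_coboundary_join_cochain_right:
  fixes f g1 g2 :: "nat set \<Rightarrow> 'k::comm_ring_1"
  assumes down: "\<forall>\<sigma>\<in>K. \<forall>\<tau>. \<tau> \<subseteq> \<sigma> \<longrightarrow> \<tau> \<in> K"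
    and fin: "finite (I \<union> J)" and dj: "I \<inter> J = {}"
    and cf: "cocycle (full_sub K I) i f"
    and cob: "is_coboundary (full_sub K J) j (\<lambda>\<sigma>. g1 \<sigma> - g2 \<sigma>)"
  shows "is_coboundary (full_sub K (I \<union> J)) (i + j + 1)
     (\<lambda>\<rho>. join_cochain I J i j f g1 \<rho> - join_cochain I J i j f g2 \<rho>)"
proof -
  obtain h where h: "\<forall>\<sigma>\<in>simplices (full_sub K J) j. g1 \<sigma> - g2 \<sigma> = coboundary h \<sigma>"
    using cob unfolding is_coboundary_def by blast
  \<comment> \<open>the sign \<open>(-1)^card (\<rho> \<inter> I)\<close> of the Leibniz rule is constant on the relevant simplices\<close>
  define c :: 'k where "c = (-1)^nat (i + 1)"
  have "join_cochain I J i j f g1 \<rho> - join_cochain I J i j f g2 \<rho>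
      = coboundary (\<lambda>\<sigma>. c * join_cochain I J i (j - 1) f h \<sigma>) \<rho>"
    if \<rho>: "\<rho> \<in> simplices (full_sub K (I \<union> J)) (i + j + 1)" for \<rho>
  proof -
    have sub: "\<rho> \<subseteq> I \<union> J" using \<rho> by (auto simp: simplices_def full_sub_def)
    have "join_cochain I J (i + 1) (j - 1) (coboundary f) h \<rho> = join_cochain I J (i + 1) (j - 1) (\<lambda>\<sigma>. 0) h \<rho>"
      using cocycle_coboundary_Int_eq_0[OF down cf \<rho>] by (intro join_cochain_cong) simp
    moreover have "c * (-1)^card (\<rho> \<inter> I) * join_cochain I J i j f (coboundary h) \<rho>
        = join_cochain I J i j f (\<lambda>\<sigma>. g1 \<sigma> - g2 \<sigma>) \<rho>"
    proof (cases "int (card (\<rho> \<inter> I)) = i + 1")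
      case True
      then have "nat (i + 1) = card (\<rho> \<inter> I)" by simp
      then have "c * (-1)^card (\<rho> \<inter> I) = 1"
        unfolding c_def by (simp flip: power_mult_distrib)
      then show ?thesis
        using h Int_in_simplices_full_sub[OF down \<rho>] by (auto intro: join_cochain_cong)
    qed (simp add: join_cochain_def)
    ultimately show ?thesis
      using coboundary_join_cochain[OF finite_subset[OF sub fin] dj sub, of i "j - 1" f h]
        coboundary_linear[of c "join_cochain I J i (j - 1) f h" 0 _ \<rho>]
      by (simp add: join_cochain_zero_left join_cochain_diff_right mult.assoc)
  qed
  then show ?thesis unfolding is_coboundary_def by blast
qed

lemma bh_mult_cohom_class:
  fixes f g :: "nat set \<Rightarrow> 'k::comm_ring_1"
  assumes down: "\<forall>\<sigma>\<in>K. \<forall>\<tau>. \<tau> \<subseteq> \<sigma> \<longrightarrow> \<tau> \<in> K"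
    and fin: "finite (I \<union> J)" and dj: "I \<inter> J = {}"
    and cf: "cocycle (full_sub K I) p f" and cg: "cocycle (full_sub K J) q g"
  shows "bh_mult K I J p q (cohom_class (full_sub K I) p f) (cohom_class (full_sub K J) q g)
       = cohom_class (full_sub K (I \<union> J)) (p + q + 1) (join_cochain I J p q f g)"
proof -
  define f0 where "f0 = (SOME f'. f' \<in> cohom_class (full_sub K I) p f)"
  define g0 where "g0 = (SOME g'. g' \<in> cohom_class (full_sub K J) q g)"
  have "f0 \<in> cohom_class (full_sub K I) p f"
    unfolding f0_def using cocycle_in_cohom_class[OF cf] by (rule someI[where P="\<lambda>f'. f' \<in> _"])
  moreover have "g0 \<in> cohom_class (full_sub K J) q g"
    unfolding g0_def using cocycle_in_cohom_class[OF cg] by (rule someI[where P="\<lambda>g'. g' \<in> _"])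
  ultimately have cf0: "is_coboundary (full_sub K I) p (\<lambda>\<sigma>. f0 \<sigma> - f \<sigma>)"
    and cg0: "cocycle (full_sub K J) q g0" "is_coboundary (full_sub K J) q (\<lambda>\<sigma>. g0 \<sigma> - g \<sigma>)"
    unfolding cohom_class_def by (auto intro: is_coboundary_diff_commute)
  have "is_coboundary (full_sub K (I \<union> J)) (p + q + 1)
      (\<lambda>\<rho>. join_cochain I J p q f0 g0 \<rho> - join_cochain I J p q f g \<rho>)"
    using is_coboundary_join_cochain_left[OF down fin dj cf0 cg0(1)]
      is_coboundary_join_cochain_right[OF down fin dj cf cg0(2)]
    by (rule is_coboundary_diff_trans)
  then show ?thesis
    unfolding bh_mult_def f0_def[symmetric] g0_def[symmetric] using dj by (simp add: cohom_class_eqI)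
qed

text \<open>The cochain homotopy of that contiguity: on a simplex containing \<open>x\<close> it evaluates
  \<open>f\<close> and \<open>g\<close> on the two halves, each enlarged by \<open>x\<close>.\<close>
definition vertex_homotopy :: "nat set \<Rightarrow> nat set \<Rightarrow> nat \<Rightarrow> int \<Rightarrow> int
    \<Rightarrow> (nat set \<Rightarrow> 'k::comm_ring_1) \<Rightarrow> (nat set \<Rightarrow> 'k) \<Rightarrow> nat set \<Rightarrow> 'k" where
  "vertex_homotopy I J x i j f g \<sigma> =
     (if x \<in> \<sigma> \<and> int (card (\<sigma> \<inter> I)) = i \<and> int (card (\<sigma> \<inter> J)) = j
      then (-1)^(card (\<sigma> \<inter> I) + shuffle_inv (\<sigma> \<inter> I) (\<sigma> \<inter> J)) * f (insert x (\<sigma> \<inter> I))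
           * g (insert x (\<sigma> \<inter> J))
      else 0)"

lemma vertex_homotopy_sum_left:
  fixes f g :: "nat set \<Rightarrow> 'k::comm_ring_1"
  assumes fin: "finite a" "finite b" and sub: "a \<subseteq> I" "b \<subseteq> J"
    and dj: "I \<inter> J = {}" "x \<notin> I" "x \<notin> J"
  shows "(\<Sum>y\<in>a. (-1)^vertex_pos (insert x (a \<union> b)) y
                 * vertex_homotopy I J x i j f g (insert x (a \<union> b) - {y}))
       = (if int (card a) = i + 1 \<and> int (card b) = j
          then - ((-1)^(card a + shuffle_inv a b) * g (insert x b)
                  * (coboundary f (insert x a) - (-1)^vertex_pos a x * f a))
          else 0)"
proof -
  define \<rho> where "\<rho> = insert x a \<union> b"
  define C where "C \<longleftrightarrow> int (card a) = i + 1 \<and> int (card b) = j"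
  have "(-1)^vertex_pos \<rho> y * vertex_homotopy I J x i j f g (\<rho> - {y})
      = (if C then - ((-1)^(card a + shuffle_inv a b) * g (insert x b)
                   * ((-1)^vertex_pos (insert x a) y * f (insert x a - {y}))) else 0)"
    if y: "y \<in> a" for y
  proof -
    have face: "(\<rho> - {y}) \<inter> I = a - {y}" "(\<rho> - {y}) \<inter> J = b" "x \<in> \<rho> - {y}"
      "insert x (a - {y}) = insert x a - {y}"
      using y sub dj by (auto simp: \<rho>_def)
    have deg: "int (card (a - {y})) = i \<longleftrightarrow> int (card a) = i + 1"
      using int_card_Diff_singleton[OF fin(1) y] by linarith
    have "vertex_homotopy I J x i j f g (\<rho> - {y})
        = (if C then (-1)^(card (a - {y}) + shuffle_inv (a - {y}) b)
                     * f (insert x a - {y}) * g (insert x b) else 0)"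
      unfolding vertex_homotopy_def C_def by (simp only: face deg simp_thms)
    then have "(-1)^vertex_pos \<rho> y * vertex_homotopy I J x i j f g (\<rho> - {y})
        = (if C then ((-1)^vertex_pos \<rho> y * (-1)^shuffle_inv (a - {y}) b) * (-1)^card (a - {y})
                     * f (insert x a - {y}) * g (insert x b) else 0)"
      by (simp add: power_add mult_ac)
    also have "(-1::'k)^vertex_pos \<rho> y * (-1)^shuffle_inv (a - {y}) b
        = (-1)^vertex_pos (insert x a) y * (-1)^shuffle_inv a b"
      unfolding \<rho>_def using fin y sub dj by (intro sign_Un_remove_left) auto
    also have "(-1::'k)^card (a - {y}) = - ((-1)^card a)"
      by (simp add: card_Suc_Diff1[OF fin(1) y, symmetric])
    finally show ?thesis by (simp add: power_add mult_ac)
  qed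
  then have "(\<Sum>y\<in>a. (-1)^vertex_pos \<rho> y * vertex_homotopy I J x i j f g (\<rho> - {y}))
      = (if C then - ((-1)^(card a + shuffle_inv a b) * g (insert x b)
            * (\<Sum>y\<in>a. (-1)^vertex_pos (insert x a) y * f (insert x a - {y}))) else 0)"
    by (simp add: sum_distrib_left sum_negf)
  moreover have "x \<notin> a" using sub dj by auto
  moreover have "(\<Sum>y\<in>a. (-1)^vertex_pos (insert x a) y * f (insert x a - {y}))
      = coboundary f (insert x a) - (-1)^vertex_pos a x * f a"
    unfolding coboundary_insert[OF fin(1) \<open>x \<notin> a\<close>] by simp
  ultimately show ?thesis unfolding \<rho>_def C_def by simp
qed

lemma vertex_homotopy_sum_right:
  fixes f g :: "nat set \<Rightarrow> 'k::comm_ring_1"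
  assumes fin: "finite a" "finite b" and sub: "a \<subseteq> I" "b \<subseteq> J"
    and dj: "I \<inter> J = {}" "x \<notin> I" "x \<notin> J"
  shows "(\<Sum>y\<in>b. (-1)^vertex_pos (insert x (a \<union> b)) y
                 * vertex_homotopy I J x i j f g (insert x (a \<union> b) - {y}))
       = (if int (card a) = i \<and> int (card b) = j + 1
          then (-1)^shuffle_inv a b * f (insert x a)
               * (coboundary g (insert x b) - (-1)^vertex_pos b x * g b)
          else 0)"
proof -
  define \<rho> where "\<rho> = a \<union> insert x b"
  define C where "C \<longleftrightarrow> int (card a) = i \<and> int (card b) = j + 1"
  have "(-1)^vertex_pos \<rho> y * vertex_homotopy I J x i j f g (\<rho> - {y})
      = (if C then (-1)^shuffle_inv a b * f (insert x a)
                   * ((-1)^vertex_pos (insert x b) y * g (insert x b - {y})) else 0)"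
    if y: "y \<in> b" for y
  proof -
    have face: "(\<rho> - {y}) \<inter> I = a" "(\<rho> - {y}) \<inter> J = b - {y}" "x \<in> \<rho> - {y}"
      "insert x (b - {y}) = insert x b - {y}"
      using y sub dj by (auto simp: \<rho>_def)
    have deg: "int (card (b - {y})) = j \<longleftrightarrow> int (card b) = j + 1"
      using int_card_Diff_singleton[OF fin(2) y] by linarith
    have "vertex_homotopy I J x i j f g (\<rho> - {y})
        = (if C then (-1)^(card a + shuffle_inv a (b - {y}))
                     * f (insert x a) * g (insert x b - {y}) else 0)"
      unfolding vertex_homotopy_def C_def by (simp only: face deg simp_thms)
    then have "(-1)^vertex_pos \<rho> y * vertex_homotopy I J x i j f g (\<rho> - {y})
        = (if C then ((-1)^vertex_pos \<rho> y * (-1)^shuffle_inv a (b - {y})) * (-1)^card a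
                     * f (insert x a) * g (insert x b - {y}) else 0)"
      by (simp add: power_add mult_ac)
    also have "(-1::'k)^vertex_pos \<rho> y * (-1)^shuffle_inv a (b - {y})
        = (-1)^card a * ((-1)^vertex_pos (insert x b) y * (-1)^shuffle_inv a b)"
      unfolding \<rho>_def using fin y sub dj by (intro sign_Un_remove_right) auto
    finally show ?thesis by (simp add: power_add mult_ac flip: power_mult_distrib)
  qed
  then have "(\<Sum>y\<in>b. (-1)^vertex_pos \<rho> y * vertex_homotopy I J x i j f g (\<rho> - {y}))
      = (if C then (-1)^shuffle_inv a b * f (insert x a)
            * (\<Sum>y\<in>b. (-1)^vertex_pos (insert x b) y * g (insert x b - {y})) else 0)"
    by (simp add: sum_distrib_left)
  moreover have "x \<notin> b" using sub dj by auto
  moreover have "(\<Sum>y\<in>b. (-1)^vertex_pos (insert x b) y * g (insert x b - {y}))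
      = coboundary g (insert x b) - (-1)^vertex_pos b x * g b"
    unfolding coboundary_insert[OF fin(2) \<open>x \<notin> b\<close>] by simp
  moreover have "insert x (a \<union> b) = \<rho>" by (simp add: \<rho>_def)
  ultimately show ?thesis unfolding C_def by simp
qed

lemma coboundary_vertex_homotopy:
  fixes f g :: "nat set \<Rightarrow> 'k::comm_ring_1"
  assumes fin: "finite a" "finite b" and sub: "a \<subseteq> I" "b \<subseteq> J"
    and dj: "I \<inter> J = {}" "x \<notin> I" "x \<notin> J"
  shows "coboundary (vertex_homotopy I J x i j f g) (insert x (a \<union> b))
       = (if int (card a) = i + 1 \<and> int (card b) = j
          then - ((-1)^(card a + shuffle_inv a b) * g (insert x b)
                  * (coboundary f (insert x a) - (-1)^vertex_pos a x * f a))
          else 0)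
       + (if int (card a) = i \<and> int (card b) = j + 1
          then (-1)^shuffle_inv a b * f (insert x a)
               * (coboundary g (insert x b) - (-1)^vertex_pos b x * g b)
          else 0)"
proof -
  define F where "F y = (-1)^vertex_pos (insert x (a \<union> b)) y
    * vertex_homotopy I J x i j f g (insert x (a \<union> b) - {y})" for y
  have x: "x \<notin> a \<union> b" and "a \<inter> b = {}" using sub dj by auto
  then have "vertex_homotopy I J x i j f g (a \<union> b) = 0" by (simp add: vertex_homotopy_def)
  then have "coboundary (vertex_homotopy I J x i j f g) (insert x (a \<union> b)) = sum F (a \<union> b)"
    unfolding F_def coboundary_insert[OF finite_UnI[OF fin] x] by simp
  also have "\<dots> = sum F a + sum F b"
    using fin \<open>a \<inter> b = {}\<close> by (rule sum.union_disjoint)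
  finally show ?thesis
    unfolding F_def vertex_homotopy_sum_left[OF assms] vertex_homotopy_sum_right[OF assms] .
qed

lemma coboundary_vertex_homotopy_cocycles:
  fixes f g :: "nat set \<Rightarrow> 'k::comm_ring_1"
  assumes fin: "finite a" "finite b" and sub: "a \<subseteq> I" "b \<subseteq> J"
    and dj: "I \<inter> J = {}" "x \<notin> I" "x \<notin> J"
    and cf: "int (card a) = i + 1 \<Longrightarrow> coboundary f (insert x a) = 0"
    and cg: "int (card b) = j + 1 \<Longrightarrow> coboundary g (insert x b) = 0"
  shows "coboundary (vertex_homotopy I J x i j f g) (insert x (a \<union> b))
       = (if int (card a) = i + 1 \<and> int (card b) = j
          then (-1)^shuffle_inv a (insert x b) * f a * g (insert x b) else 0)
       - (if int (card a) = i \<and> int (card b) = j + 1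
          then (-1)^shuffle_inv (insert x a) b * f (insert x a) * g b else 0)"
proof -
  have xab: "x \<notin> a" "x \<notin> b" using sub dj by auto
  show ?thesis
    unfolding coboundary_vertex_homotopy[OF fin sub dj] shuffle_sign_insert_right[OF fin xab]
      shuffle_inv_insert_left[OF fin xab(1)]
    using cf cg by (simp add: power_add mult_ac)
qed

lemma is_coboundary_join_cochain_move_vertex:
  fixes f g :: "nat set \<Rightarrow> 'k::comm_ring_1"
  assumes down: "\<forall>\<sigma>\<in>K. \<forall>\<tau>. \<tau> \<subseteq> \<sigma> \<longrightarrow> \<tau> \<in> K"
    and fin: "finite (I \<union> J)" and dj: "I \<inter> J = {}" and x: "x \<in> J"
    and cf: "cocycle (full_sub K (insert x I)) i f" and cg: "cocycle (full_sub K J) j g"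
  shows "is_coboundary (full_sub K (I \<union> J)) (i + j + 1)
     (\<lambda>\<rho>. join_cochain I J i j f g \<rho> - join_cochain (insert x I) (J - {x}) i j f g \<rho>)"
proof -
  define H where "H = vertex_homotopy I (J - {x}) x i j f g"
  have "join_cochain I J i j f g \<rho> - join_cochain (insert x I) (J - {x}) i j f g \<rho> = coboundary H \<rho>"
    if \<rho>: "\<rho> \<in> simplices (full_sub K (I \<union> J)) (i + j + 1)" for \<rho>
  proof (cases "x \<in> \<rho>")
    case False
    then have "\<rho> \<inter> insert x I = \<rho> \<inter> I" "\<rho> \<inter> (J - {x}) = \<rho> \<inter> J" by auto
    moreover have "coboundary H \<rho> = 0"
      using False by (simp add: H_def coboundary_def vertex_homotopy_def)
    ultimately show ?thesis by (simp add: join_cochain_def)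
  next
    case True
    define a where "a = \<rho> \<inter> I"
    define b where "b = \<rho> \<inter> (J - {x})"
    have \<rho>_eq: "\<rho> = insert x (a \<union> b)" "\<rho> \<inter> insert x I = insert x a" "\<rho> \<inter> J = insert x b"
      using True x \<rho> by (auto simp: a_def b_def simplices_def full_sub_def)
    have fin_ab: "finite a" "finite b" and xab: "x \<notin> a" "x \<notin> b"
      using fin x dj \<rho> by (auto simp: a_def b_def simplices_def full_sub_def intro: finite_subset)
    have "int (card a) = i + 1 \<Longrightarrow> coboundary f (insert x a) = 0"
      using cocycle_coboundary_Int_eq_0[OF down cf \<rho>] \<rho>_eq(2) fin_ab xab by simp
    moreover have "int (card b) = j + 1 \<Longrightarrow> coboundary g (insert x b) = 0"
      using cocycle_coboundary_Int_eq_0[OF down cg \<rho>] \<rho>_eq(3) fin_ab xab by simp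
    ultimately have "coboundary H \<rho>
       = (if int (card a) = i + 1 \<and> int (card b) = j
          then (-1)^shuffle_inv a (insert x b) * f a * g (insert x b) else 0)
       - (if int (card a) = i \<and> int (card b) = j + 1
          then (-1)^shuffle_inv (insert x a) b * f (insert x a) * g b else 0)"
      unfolding H_def \<rho>_eq(1) using dj x
      by (intro coboundary_vertex_homotopy_cocycles[OF fin_ab]) (auto simp: a_def b_def)
    moreover have "join_cochain I J i j f g \<rho> = (if int (card a) = i + 1 \<and> int (card b) = j
        then (-1)^shuffle_inv a (insert x b) * f a * g (insert x b) else 0)"
      unfolding join_cochain_def \<rho>_eq(3) a_def[symmetric] using fin_ab xab by simp
    moreover have "join_cochain (insert x I) (J - {x}) i j f g \<rho> = (if int (card a) = i \<and> int (card b) = j + 1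
        then (-1)^shuffle_inv (insert x a) b * f (insert x a) * g b else 0)"
      unfolding join_cochain_def \<rho>_eq(2) b_def[symmetric] using fin_ab xab by simp
    ultimately show ?thesis by simp
  qed
  then show ?thesis unfolding is_coboundary_def by blast
qed

lemma is_coboundary_join_cochain_move_vertices:
  fixes f g :: "nat set \<Rightarrow> 'k::comm_ring_1"
  assumes down: "\<forall>\<sigma>\<in>K. \<forall>\<tau>. \<tau> \<subseteq> \<sigma> \<longrightarrow> \<tau> \<in> K"
    and fin: "finite (I \<union> J)" and dj: "I \<inter> J = {}" and L: "finite L" "L \<subseteq> J"
    and cf: "cocycle (full_sub K (I \<union> L)) i f" and cg: "cocycle (full_sub K J) j g"
  shows "is_coboundary (full_sub K (I \<union> J)) (i + j + 1)
     (\<lambda>\<rho>. join_cochain I J i j f g \<rho> - join_cochain (I \<union> L) (J - L) i j f g \<rho>)"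
  using L cf
proof (induction L rule: finite_induct)
  case empty
  show ?case by (simp add: is_coboundary_zero)
next
  case (insert x L)
  have eqs: "(I \<union> L) \<union> (J - L) = I \<union> J" "(I \<union> L) \<inter> (J - L) = {}" "x \<in> J - L"
    "insert x (I \<union> L) = I \<union> insert x L" "J - L - {x} = J - insert x L"
    using insert.hyps insert.prems dj by auto
  have "is_coboundary (full_sub K ((I \<union> L) \<union> (J - L))) (i + j + 1)
      (\<lambda>\<rho>. join_cochain (I \<union> L) (J - L) i j f g \<rho>
           - join_cochain (insert x (I \<union> L)) (J - L - {x}) i j f g \<rho>)"
  proof (rule is_coboundary_join_cochain_move_vertex[OF down _ eqs(2,3)])
    show "finite ((I \<union> L) \<union> (J - L))" using fin by (simp only: eqs(1))
    show "cocycle (full_sub K (insert x (I \<union> L))) i f" unfolding eqs(4) by (rule insert.prems(2))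
    show "cocycle (full_sub K (J - L)) j g" by (rule cocycle_full_sub_mono[OF Diff_subset cg])
  qed
  then have "is_coboundary (full_sub K (I \<union> J)) (i + j + 1)
      (\<lambda>\<rho>. join_cochain (I \<union> L) (J - L) i j f g \<rho>
           - join_cochain (I \<union> insert x L) (J - insert x L) i j f g \<rho>)"
    unfolding eqs .
  moreover have "cocycle (full_sub K (I \<union> L)) i f"
    using insert.prems(2) by (rule cocycle_full_sub_mono[rotated]) auto
  then have "is_coboundary (full_sub K (I \<union> J)) (i + j + 1)
      (\<lambda>\<rho>. join_cochain I J i j f g \<rho> - join_cochain (I \<union> L) (J - L) i j f g \<rho>)"
    using insert.prems(1) by (intro insert.IH) auto
  ultimately show ?case by (rule is_coboundary_diff_trans[rotated])
qed

theorem mainTheorem17: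
  fixes K :: "nat set set" and m :: nat and i j :: int and I J I' :: "nat set"
    and \<alpha> \<beta> \<alpha>' :: "(nat set \<Rightarrow> 'k::comm_ring_1) set"
  assumes "simplicial_complex m K"
    and "I \<subseteq> {1..m}" and "J \<subseteq> {1..m}" and "I \<inter> J = {}"
    and "i \<ge> -1" and "j \<ge> -1"
    and "\<alpha> \<in> rcohom (full_sub K I) i" and "\<beta> \<in> rcohom (full_sub K J) j"
    and "I \<subseteq> I'" and "I' \<subseteq> I \<union> J"
    and "\<alpha>' \<in> rcohom (full_sub K I') i"
    and "\<alpha> = induced_incl (full_sub K I) i \<alpha>'"
  shows "bh_mult K I J i j \<alpha> \<beta>
       = bh_mult K I' ((I \<union> J) - I') i j \<alpha>' (induced_incl (full_sub K ((I \<union> J) - I')) j \<beta>)"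
proof -
  have down: "\<forall>\<sigma>\<in>K. \<forall>\<tau>. \<tau> \<subseteq> \<sigma> \<longrightarrow> \<tau> \<in> K"
    using assms(1) unfolding simplicial_complex_def by blast
  have fin: "finite (I \<union> J)" using assms(2,3) finite_subset by auto
  obtain f where \<alpha>': "\<alpha>' = cohom_class (full_sub K I') i f" and f: "cocycle (full_sub K I') i f"
    using assms(11) unfolding rcohom_def by blast
  obtain g where \<beta>: "\<beta> = cohom_class (full_sub K J) j g" and g: "cocycle (full_sub K J) j g"
    using assms(8) unfolding rcohom_def by blast
  define L where "L = I' - I"
  define J' where "J' = (I \<union> J) - I'"
  have I': "I' = I \<union> L" and J': "J' = J - L" and "L \<subseteq> J" "J' \<subseteq> J"
    and un: "I' \<union> J' = I \<union> J" and dj: "I' \<inter> J' = {}"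
    using assms(4,9,10) by (auto simp: L_def J'_def)
  have "bh_mult K I J i j \<alpha> \<beta> = cohom_class (full_sub K (I \<union> J)) (i + j + 1) (join_cochain I J i j f g)"
    using bh_mult_cohom_class[OF down fin assms(4) cocycle_full_sub_mono[OF assms(9) f] g]
    unfolding assms(12) \<alpha>' \<beta> induced_incl_cohom_class[OF assms(9) f] .
  also have "\<dots> = cohom_class (full_sub K (I \<union> J)) (i + j + 1) (join_cochain I' J' i j f g)"
    using is_coboundary_join_cochain_move_vertices[OF down fin assms(4) _ \<open>L \<subseteq> J\<close> f[unfolded I'] g]
      finite_subset[OF \<open>L \<subseteq> J\<close>] fin
    unfolding J' I' by (simp add: cohom_class_eqI)
  also have "\<dots> = bh_mult K I' J' i j \<alpha>' (induced_incl (full_sub K J') j \<beta>)"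
    using bh_mult_cohom_class[OF down _ dj f cocycle_full_sub_mono[OF \<open>J' \<subseteq> J\<close> g]] fin
    unfolding \<alpha>' \<beta> induced_incl_cohom_class[OF \<open>J' \<subseteq> J\<close> g] un by simp
  finally show ?thesis unfolding J'_def .
qed

end
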